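(* Let $F:\mathcal{C}\to\mathcal{D}$ be left adjoint to $G:\mathcal{D}\to\mathcal{C}$, with unit $\eta:1_{\mathcal{C}}\to GF$ and counit $\varepsilon:FG\to 1_{\mathcal{D}}$. 1. $F$ is naturally full if and only if there exists a natural transformation $\nu:GF\to 1_{\mathcal{C}}$ such that $\eta_C\circ\nu_C=\mathrm{id}_{GFC}$ for all $C\in\mathcal{C}$. In this case, $\varepsilon_{FC}$ is an isomorphism in $\mathcal{D}$ with inverse $F(\eta_C)$, for every $C\in\mathcal{C}$. 2. $G$ is naturally full if and only if there exists a natural transformation $\xi:1_{\mathcal{D}}\to FG$ such that $\xi_D\circ\varepsilon_D=\mathrm{id}_{FGD}$ for all $D\in\mathcal{D}$. In this case, $G(\varepsilon_D)$ is an isomorphism in $\mathcal{C}$ with inverse $\eta_{GD}$, for every $D\in\mathcal{D}$.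
   Context: For a functor $F:\mathcal{A}\to\mathcal{B}$, let $\mathcal{F}:\mathrm{Hom}_{\mathcal{A}}(\bullet,\bullet)\to\mathrm{Hom}_{\mathcal{B}}(F(\bullet),F(\bullet))$, $\mathcal{F}_{A,A'}(f)=F(f)$. $F$ is called naturally full if there is a natural transformation $\mathcal{P}:\mathrm{Hom}_{\mathcal{B}}(F(\bullet),F(\bullet))\to\mathrm{Hom}_{\mathcal{A}}(\bullet,\bullet)$ (natural in both variables: $\mathcal{P}_{X,T}(F(h)\circ g\circ F(f))=h\circ\mathcal{P}_{Y,Z}(g)\circ f$) such that $F(\mathcal{P}_{A,A'}(u))=u$ for all $A,A'$ and all $u:F(A)\to F(A')$. *)

theory Defs
  imports Main
begin

text \<open>Categories given by objects, arrows, domain, codomain, composition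
  (comp g f = g after f) and identities.\<close>

record ('o, 'a) category =
  Ob :: "'o set"
  Ar :: "'a set"
  dom :: "'a \<Rightarrow> 'o"
  cod :: "'a \<Rightarrow> 'o"
  comp :: "'a \<Rightarrow> 'a \<Rightarrow> 'a"
  idt :: "'o \<Rightarrow> 'a"

definition Hom :: "('o, 'a) category \<Rightarrow> 'o \<Rightarrow> 'o \<Rightarrow> 'a set" where
  "Hom C A B = {f \<in> Ar C. dom C f = A \<and> cod C f = B}"

definition is_category :: "('o, 'a) category \<Rightarrow> bool" where
  "is_category C \<longleftrightarrow>
     (\<forall>f \<in> Ar C. dom C f \<in> Ob C \<and> cod C f \<in> Ob C)
   \<and> (\<forall>A \<in> Ob C. idt C A \<in> Hom C A A)
   \<and> (\<forall>A \<in> Ob C. \<forall>B \<in> Ob C. \<forall>D \<in> Ob C. \<forall>f \<in> Hom C A B. \<forall>g \<in> Hom C B D.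
         comp C g f \<in> Hom C A D)
   \<and> (\<forall>A \<in> Ob C. \<forall>B \<in> Ob C. \<forall>f \<in> Hom C A B.
         comp C (idt C B) f = f \<and> comp C f (idt C A) = f)
   \<and> (\<forall>A \<in> Ob C. \<forall>B \<in> Ob C. \<forall>D \<in> Ob C. \<forall>E \<in> Ob C.
       \<forall>f \<in> Hom C A B. \<forall>g \<in> Hom C B D. \<forall>h \<in> Hom C D E.
         comp C h (comp C g f) = comp C (comp C h g) f)"

definition is_functor ::
  "('o, 'a) category \<Rightarrow> ('p, 'b) category \<Rightarrow> ('o \<Rightarrow> 'p) \<Rightarrow> ('a \<Rightarrow> 'b) \<Rightarrow> bool" where
  "is_functor C D Fo Fa \<longleftrightarrow>
     is_category C \<and> is_category D
   \<and> (\<forall>A \<in> Ob C. Fo A \<in> Ob D)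
   \<and> (\<forall>A \<in> Ob C. \<forall>B \<in> Ob C. \<forall>f \<in> Hom C A B. Fa f \<in> Hom D (Fo A) (Fo B))
   \<and> (\<forall>A \<in> Ob C. Fa (idt C A) = idt D (Fo A))
   \<and> (\<forall>A \<in> Ob C. \<forall>B \<in> Ob C. \<forall>E \<in> Ob C. \<forall>f \<in> Hom C A B. \<forall>g \<in> Hom C B E.
         Fa (comp C g f) = comp D (Fa g) (Fa f))"

definition is_nat_trans ::
  "('o, 'a) category \<Rightarrow> ('p, 'b) category \<Rightarrow> ('o \<Rightarrow> 'p) \<Rightarrow> ('a \<Rightarrow> 'b)
     \<Rightarrow> ('o \<Rightarrow> 'p) \<Rightarrow> ('a \<Rightarrow> 'b) \<Rightarrow> ('o \<Rightarrow> 'b) \<Rightarrow> bool" where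
  "is_nat_trans C D Fo Fa Go Ga tau \<longleftrightarrow>
     is_functor C D Fo Fa \<and> is_functor C D Go Ga
   \<and> (\<forall>A \<in> Ob C. tau A \<in> Hom D (Fo A) (Go A))
   \<and> (\<forall>A \<in> Ob C. \<forall>B \<in> Ob C. \<forall>f \<in> Hom C A B.
         comp D (tau B) (Fa f) = comp D (Ga f) (tau A))"

definition is_adjunction ::
  "('o, 'a) category \<Rightarrow> ('p, 'b) category \<Rightarrow> ('o \<Rightarrow> 'p) \<Rightarrow> ('a \<Rightarrow> 'b)
     \<Rightarrow> ('p \<Rightarrow> 'o) \<Rightarrow> ('b \<Rightarrow> 'a) \<Rightarrow> ('o \<Rightarrow> 'a) \<Rightarrow> ('p \<Rightarrow> 'b) \<Rightarrow> bool" where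
  "is_adjunction C D Fo Fa Go Ga eta eps \<longleftrightarrow>
     is_functor C D Fo Fa \<and> is_functor D C Go Ga
   \<and> is_nat_trans C C id id (Go \<circ> Fo) (Ga \<circ> Fa) eta
   \<and> is_nat_trans D D (Fo \<circ> Go) (Fa \<circ> Ga) id id eps
   \<and> (\<forall>A \<in> Ob C. comp D (eps (Fo A)) (Fa (eta A)) = idt D (Fo A))
   \<and> (\<forall>B \<in> Ob D. comp C (Ga (eps B)) (eta (Go B)) = idt C (Go B))"

definition naturally_full ::
  "('o, 'a) category \<Rightarrow> ('p, 'b) category \<Rightarrow> ('o \<Rightarrow> 'p) \<Rightarrow> ('a \<Rightarrow> 'b) \<Rightarrow> bool" where
  "naturally_full C D Fo Fa \<longleftrightarrow>
     (\<exists>P :: 'o \<Rightarrow> 'o \<Rightarrow> 'b \<Rightarrow> 'a.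
        (\<forall>X \<in> Ob C. \<forall>Y \<in> Ob C. \<forall>u \<in> Hom D (Fo X) (Fo Y). P X Y u \<in> Hom C X Y)
      \<and> (\<forall>X \<in> Ob C. \<forall>Y \<in> Ob C. \<forall>Z \<in> Ob C. \<forall>T \<in> Ob C.
           \<forall>f \<in> Hom C X Y. \<forall>g \<in> Hom D (Fo Y) (Fo Z). \<forall>h \<in> Hom C Z T.
             P X T (comp D (Fa h) (comp D g (Fa f))) = comp C h (comp C (P Y Z g) f))
      \<and> (\<forall>X \<in> Ob C. \<forall>Y \<in> Ob C. \<forall>u \<in> Hom D (Fo X) (Fo Y). Fa (P X Y u) = u))"

end

(* If P witnesses that F is naturally full, then nu_X := P (eps_FX) is a natural
   section of the unit; conversely a natural section nu of the unit yields the splitting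
   P u := nu_Y o G u o eta_X.  In both directions the key point is that F nu_X = eps_FX,
   because both arrows have the same adjoint transpose, namely the identity of GFX; hence
   F eta_X o eps_FX = F (eta_X o nu_X) = id.  The statement about G is the statement about F
   for the dual adjunction between the opposite categories, in which G is the left adjoint. *)

theory Submission
  imports Defs
begin

lemma cat_dom_cod_Ob:
  assumes "is_category C" "f \<in> Ar C"
  shows "dom C f \<in> Ob C" "cod C f \<in> Ob C"
  using assms by (auto simp: is_category_def)

lemma cat_idt [simp]:
  assumes "is_category C" "A \<in> Ob C"
  shows "idt C A \<in> Ar C" "dom C (idt C A) = A" "cod C (idt C A) = A"
  using assms by (auto simp: is_category_def Hom_def)

lemma cat_comp [simp]:
  assumes "is_category C" "f \<in> Ar C" "g \<in> Ar C" "dom C g = cod C f"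
  shows "comp C g f \<in> Ar C" "dom C (comp C g f) = dom C f" "cod C (comp C g f) = cod C g"
proof -
  have "f \<in> Hom C (dom C f) (cod C f)" "g \<in> Hom C (cod C f) (cod C g)"
    using assms by (simp_all add: Hom_def)
  then have "comp C g f \<in> Hom C (dom C f) (cod C g)"
    using assms(1) cat_dom_cod_Ob[OF assms(1)] assms(2,3) unfolding is_category_def by blast
  then show "comp C g f \<in> Ar C" "dom C (comp C g f) = dom C f" "cod C (comp C g f) = cod C g"
    by (simp_all add: Hom_def)
qed

lemma cat_idt_comp [simp]:
  assumes "is_category C" "f \<in> Ar C" "cod C f = B"
  shows "comp C (idt C B) f = f"
proof -
  have "f \<in> Hom C (dom C f) B" "dom C f \<in> Ob C" "B \<in> Ob C"
    using assms cat_dom_cod_Ob[OF assms(1,2)] by (simp_all add: Hom_def)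
  then show ?thesis
    using assms(1) unfolding is_category_def by blast
qed

lemma cat_comp_idt [simp]:
  assumes "is_category C" "f \<in> Ar C" "dom C f = A"
  shows "comp C f (idt C A) = f"
proof -
  have "f \<in> Hom C A (cod C f)" "A \<in> Ob C" "cod C f \<in> Ob C"
    using assms cat_dom_cod_Ob[OF assms(1,2)] by (simp_all add: Hom_def)
  then show ?thesis
    using assms(1) unfolding is_category_def by blast
qed

lemma cat_comp_assoc [simp]:
  assumes "is_category C" "f \<in> Ar C" "g \<in> Ar C" "h \<in> Ar C"
    and "dom C g = cod C f" "dom C h = cod C g"
  shows "comp C (comp C h g) f = comp C h (comp C g f)"
proof -
  have assoc: "\<forall>A \<in> Ob C. \<forall>B \<in> Ob C. \<forall>D \<in> Ob C. \<forall>E \<in> Ob C.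
      \<forall>f \<in> Hom C A B. \<forall>g \<in> Hom C B D. \<forall>h \<in> Hom C D E.
        comp C h (comp C g f) = comp C (comp C h g) f"
    using assms(1) unfolding is_category_def by blast
  have "f \<in> Hom C (dom C f) (cod C f)" "g \<in> Hom C (cod C f) (cod C g)"
    "h \<in> Hom C (cod C g) (cod C h)"
    using assms by (simp_all add: Hom_def)
  moreover have "dom C f \<in> Ob C" "cod C f \<in> Ob C" "cod C g \<in> Ob C" "cod C h \<in> Ob C"
    using assms cat_dom_cod_Ob[OF assms(1)] by simp_all
  ultimately show ?thesis
    using assoc by simp
qed

lemma functor_categories:
  assumes "is_functor C D Fo Fa"
  shows "is_category C" "is_category D"
  using assms by (simp_all add: is_functor_def)

lemma functor_arr:
  assumes "is_functor C D Fo Fa" "f \<in> Ar C"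
  shows "Fa f \<in> Ar D" "dom D (Fa f) = Fo (dom C f)" "cod D (Fa f) = Fo (cod C f)"
  using assms cat_dom_cod_Ob[OF functor_categories(1)[OF assms(1)] assms(2)]
  unfolding is_functor_def Hom_def by blast+

lemma functor_Ob:
  assumes "is_functor C D Fo Fa" "A \<in> Ob C"
  shows "Fo A \<in> Ob D"
  using assms by (simp add: is_functor_def)

lemma functor_idt:
  assumes "is_functor C D Fo Fa" "A \<in> Ob C"
  shows "Fa (idt C A) = idt D (Fo A)"
  using assms by (simp add: is_functor_def)

lemma functor_comp:
  assumes "is_functor C D Fo Fa" "f \<in> Ar C" "g \<in> Ar C" "dom C g = cod C f"
  shows "Fa (comp C g f) = comp D (Fa g) (Fa f)"
proof -
  have "f \<in> Hom C (dom C f) (cod C f)" "g \<in> Hom C (cod C f) (cod C g)"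
    using assms by (simp_all add: Hom_def)
  then show ?thesis
    using assms(1) cat_dom_cod_Ob[OF functor_categories(1)[OF assms(1)]] assms(2,3)
    unfolding is_functor_def by blast
qed

lemma nat_trans_component:
  assumes "is_nat_trans C D Fo Fa Go Ga tau" "A \<in> Ob C"
  shows "tau A \<in> Ar D" "dom D (tau A) = Fo A" "cod D (tau A) = Go A"
  using assms by (simp_all add: is_nat_trans_def Hom_def)

lemma nat_trans_naturality:
  assumes "is_nat_trans C D Fo Fa Go Ga tau" "f \<in> Hom C A B"
  shows "comp D (tau B) (Fa f) = comp D (Ga f) (tau A)"
proof -
  have "is_functor C D Fo Fa"
    using assms(1) by (simp add: is_nat_trans_def)
  then have "is_category C"
    by (rule functor_categories(1))
  then have "A \<in> Ob C" "B \<in> Ob C"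
    using assms(2) cat_dom_cod_Ob by (auto simp: Hom_def)
  moreover have "\<forall>A \<in> Ob C. \<forall>B \<in> Ob C. \<forall>f \<in> Hom C A B.
      comp D (tau B) (Fa f) = comp D (Ga f) (tau A)"
    using assms(1) by (simp add: is_nat_trans_def)
  ultimately show ?thesis
    using assms(2) by blast
qed

definition op_cat :: "('o, 'a) category \<Rightarrow> ('o, 'a) category" where
  "op_cat C = \<lparr>Ob = Ob C, Ar = Ar C, dom = cod C, cod = dom C,
    comp = (\<lambda>g f. comp C f g), idt = idt C\<rparr>"

lemma op_cat_simps [simp]:
  "Ob (op_cat C) = Ob C" "Ar (op_cat C) = Ar C" "dom (op_cat C) = cod C" "cod (op_cat C) = dom C"
  "comp (op_cat C) g f = comp C f g" "idt (op_cat C) = idt C"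
  by (simp_all add: op_cat_def)

lemma op_cat_op_cat [simp]: "op_cat (op_cat C) = C"
  by (simp add: op_cat_def)

lemma Hom_op_cat [simp]: "Hom (op_cat C) A B = Hom C B A"
  by (auto simp: Hom_def)

lemma is_category_op_cat [simp]: "is_category (op_cat C) \<longleftrightarrow> is_category C"
  unfolding is_category_def by (auto; metis)

lemma is_functor_op_cat [simp]:
  "is_functor (op_cat C) (op_cat D) Fo Fa \<longleftrightarrow> is_functor C D Fo Fa"
  unfolding is_functor_def by auto

lemma is_nat_trans_op_cat [simp]:
  "is_nat_trans (op_cat C) (op_cat D) Go Ga Fo Fa tau \<longleftrightarrow> is_nat_trans C D Fo Fa Go Ga tau"
  unfolding is_nat_trans_def by auto

lemma is_adjunction_op_cat:
  assumes "is_adjunction C D Fo Fa Go Ga eta eps"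
  shows "is_adjunction (op_cat D) (op_cat C) Go Ga Fo Fa eps eta"
  using assms unfolding is_adjunction_def by simp

lemma naturally_full_op_cat:
  assumes F: "is_functor C D Fo Fa" and "naturally_full C D Fo Fa"
  shows "naturally_full (op_cat C) (op_cat D) Fo Fa"
proof -
  obtain P where
    P_Hom: "\<forall>X \<in> Ob C. \<forall>Y \<in> Ob C. \<forall>u \<in> Hom D (Fo X) (Fo Y). P X Y u \<in> Hom C X Y" and
    P_natural: "\<forall>X \<in> Ob C. \<forall>Y \<in> Ob C. \<forall>Z \<in> Ob C. \<forall>T \<in> Ob C.
      \<forall>f \<in> Hom C X Y. \<forall>g \<in> Hom D (Fo Y) (Fo Z). \<forall>h \<in> Hom C Z T.
        P X T (comp D (Fa h) (comp D g (Fa f))) = comp C h (comp C (P Y Z g) f)" and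
    P_lifts: "\<forall>X \<in> Ob C. \<forall>Y \<in> Ob C. \<forall>u \<in> Hom D (Fo X) (Fo Y). Fa (P X Y u) = u"
    using assms(2) unfolding naturally_full_def by blast
  have "P T X (comp D (comp D (Fa f) g) (Fa h)) = comp C (comp C f (P Z Y g)) h"
    if "X \<in> Ob C" "Y \<in> Ob C" "Z \<in> Ob C" "T \<in> Ob C"
      and "f \<in> Hom C Y X" "g \<in> Hom D (Fo Z) (Fo Y)" "h \<in> Hom C T Z"
    for X Y Z T f g h
  proof -
    have "P Z Y g \<in> Hom C Z Y"
      using P_Hom that by blast
    then show ?thesis
      using that P_natural functor_categories[OF F] by (simp add: Hom_def functor_arr[OF F])
  qed
  then show ?thesis
    unfolding naturally_full_def using P_Hom P_lifts
    by (intro exI[of _ "\<lambda>X Y. P Y X"]) auto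
qed

lemma naturally_full_op_cat_iff:
  assumes "is_functor C D Fo Fa"
  shows "naturally_full (op_cat C) (op_cat D) Fo Fa \<longleftrightarrow> naturally_full C D Fo Fa"
  using assms naturally_full_op_cat[of "op_cat C" "op_cat D" Fo Fa] naturally_full_op_cat
  by auto

lemma naturally_fullE:
  assumes F: "is_functor C D Fo Fa" and "naturally_full C D Fo Fa"
  obtains P where
    "\<And>X Y u. \<lbrakk>X \<in> Ob C; Y \<in> Ob C; u \<in> Hom D (Fo X) (Fo Y)\<rbrakk>
      \<Longrightarrow> P X Y u \<in> Hom C X Y"
    "\<And>X Y u. \<lbrakk>X \<in> Ob C; Y \<in> Ob C; u \<in> Hom D (Fo X) (Fo Y)\<rbrakk>
      \<Longrightarrow> Fa (P X Y u) = u"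
    "\<And>X Y Z u h. \<lbrakk>X \<in> Ob C; u \<in> Hom D (Fo X) (Fo Y); h \<in> Hom C Y Z\<rbrakk>
      \<Longrightarrow> P X Z (comp D (Fa h) u) = comp C h (P X Y u)"
    "\<And>X Y Z f u. \<lbrakk>Z \<in> Ob C; f \<in> Hom C X Y; u \<in> Hom D (Fo Y) (Fo Z)\<rbrakk>
      \<Longrightarrow> P X Z (comp D u (Fa f)) = comp C (P Y Z u) f"
proof -
  obtain P where
    P_Hom: "\<forall>X \<in> Ob C. \<forall>Y \<in> Ob C. \<forall>u \<in> Hom D (Fo X) (Fo Y). P X Y u \<in> Hom C X Y" and
    P_natural: "\<forall>X \<in> Ob C. \<forall>Y \<in> Ob C. \<forall>Z \<in> Ob C. \<forall>T \<in> Ob C.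
      \<forall>f \<in> Hom C X Y. \<forall>g \<in> Hom D (Fo Y) (Fo Z). \<forall>h \<in> Hom C Z T.
        P X T (comp D (Fa h) (comp D g (Fa f))) = comp C h (comp C (P Y Z g) f)" and
    P_lifts: "\<forall>X \<in> Ob C. \<forall>Y \<in> Ob C. \<forall>u \<in> Hom D (Fo X) (Fo Y). Fa (P X Y u) = u"
    using assms(2) unfolding naturally_full_def by blast
  have C: "is_category C" and D: "is_category D"
    using functor_categories[OF F] by auto
  have P_left: "P X Z (comp D (Fa h) u) = comp C h (P X Y u)"
    if "X \<in> Ob C" "u \<in> Hom D (Fo X) (Fo Y)" "h \<in> Hom C Y Z" for X Y Z u h
  proof -
    have "Y \<in> Ob C" "Z \<in> Ob C"
      using that(3) cat_dom_cod_Ob[OF C] by (auto simp: Hom_def)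
    moreover have "idt C X \<in> Hom C X X"
      using that(1) C by (simp add: Hom_def)
    ultimately have "P X Z (comp D (Fa h) (comp D u (Fa (idt C X))))
        = comp C h (comp C (P X Y u) (idt C X))"
      using that P_natural by blast
    moreover have "P X Y u \<in> Hom C X Y"
      using P_Hom that \<open>Y \<in> Ob C\<close> by blast
    ultimately show ?thesis
      using that C D by (simp add: Hom_def functor_idt[OF F])
  qed
  have P_right: "P X Z (comp D u (Fa f)) = comp C (P Y Z u) f"
    if "Z \<in> Ob C" "f \<in> Hom C X Y" "u \<in> Hom D (Fo Y) (Fo Z)" for X Y Z f u
  proof -
    have "X \<in> Ob C" "Y \<in> Ob C"
      using that(2) cat_dom_cod_Ob[OF C] by (auto simp: Hom_def)
    moreover have "idt C Z \<in> Hom C Z Z"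
      using that(1) C by (simp add: Hom_def)
    ultimately have "P X Z (comp D (Fa (idt C Z)) (comp D u (Fa f)))
        = comp C (idt C Z) (comp C (P Y Z u) f)"
      using that P_natural by blast
    moreover have "P Y Z u \<in> Hom C Y Z"
      using P_Hom that \<open>Y \<in> Ob C\<close> by blast
    ultimately show ?thesis
      using that C D by (simp add: Hom_def functor_idt[OF F] functor_arr[OF F])
  qed
  show ?thesis
    by (rule that) (use P_Hom P_lifts P_left P_right in blast)+
qed

locale adjunction =
  fixes C :: "('o, 'a) category" and D :: "('p, 'b) category"
    and Fo :: "'o \<Rightarrow> 'p" and Fa :: "'a \<Rightarrow> 'b"
    and Go :: "'p \<Rightarrow> 'o" and Ga :: "'b \<Rightarrow> 'a"
    and eta :: "'o \<Rightarrow> 'a" and eps :: "'p \<Rightarrow> 'b"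
  assumes is_adjunction: "is_adjunction C D Fo Fa Go Ga eta eps"
begin

lemma F_functor: "is_functor C D Fo Fa"
  and G_functor: "is_functor D C Go Ga"
  and unit_nat_trans: "is_nat_trans C C id id (Go \<circ> Fo) (Ga \<circ> Fa) eta"
  and counit_nat_trans: "is_nat_trans D D (Fo \<circ> Go) (Fa \<circ> Ga) id id eps"
  and triangle_left [simp]: "X \<in> Ob C \<Longrightarrow> comp D (eps (Fo X)) (Fa (eta X)) = idt D (Fo X)"
  and triangle_right [simp]: "Y \<in> Ob D \<Longrightarrow> comp C (Ga (eps Y)) (eta (Go Y)) = idt C (Go Y)"
  using is_adjunction unfolding is_adjunction_def by auto

lemma categories [simp]: "is_category C" "is_category D"
  using functor_categories[OF F_functor] by auto

lemmas F_Ob [simp] = functor_Ob[OF F_functor]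
  and G_Ob [simp] = functor_Ob[OF G_functor]
  and F_arr [simp] = functor_arr[OF F_functor]
  and G_arr [simp] = functor_arr[OF G_functor]
  and F_idt [simp] = functor_idt[OF F_functor]
  and F_comp = functor_comp[OF F_functor]
  and G_comp = functor_comp[OF G_functor]

lemma unit_component [simp]:
  assumes "X \<in> Ob C"
  shows "eta X \<in> Ar C" "dom C (eta X) = X" "cod C (eta X) = Go (Fo X)"
  using nat_trans_component[OF unit_nat_trans assms] by auto

lemma counit_component [simp]:
  assumes "Y \<in> Ob D"
  shows "eps Y \<in> Ar D" "dom D (eps Y) = Fo (Go Y)" "cod D (eps Y) = Y"
  using nat_trans_component[OF counit_nat_trans assms] by auto

lemma unit_natural: "f \<in> Hom C X Y \<Longrightarrow> comp C (Ga (Fa f)) (eta X) = comp C (eta Y) f"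
  using nat_trans_naturality[OF unit_nat_trans] by (metis comp_apply id_apply)

lemma counit_natural: "f \<in> Hom D X Y \<Longrightarrow> comp D (eps Y) (Fa (Ga f)) = comp D f (eps X)"
  using nat_trans_naturality[OF counit_nat_trans] by (metis comp_apply id_apply)

lemma counit_transpose:
  assumes "X \<in> Ob C" "a \<in> Hom D (Fo X) Y"
  shows "comp D (eps Y) (Fa (comp C (Ga a) (eta X))) = a"
proof -
  have a: "a \<in> Ar D" "dom D a = Fo X" "cod D a = Y" "Y \<in> Ob D"
    using assms cat_dom_cod_Ob[of D a] by (auto simp: Hom_def)
  have "comp D (eps Y) (Fa (comp C (Ga a) (eta X)))
      = comp D (comp D (eps Y) (Fa (Ga a))) (Fa (eta X))"
    using assms a by (simp add: F_comp)
  also have "\<dots> = comp D (comp D a (eps (Fo X))) (Fa (eta X))"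
    by (simp only: counit_natural[OF assms(2)])
  also have "\<dots> = a"
    using assms a by simp
  finally show ?thesis .
qed

lemma eq_if_transpose_eq:
  assumes "X \<in> Ob C" "a \<in> Hom D (Fo X) Y" "b \<in> Hom D (Fo X) Y"
    and "comp C (Ga a) (eta X) = comp C (Ga b) (eta X)"
  shows "a = b"
  by (metis assms counit_transpose)

lemma Fa_unit_section_eq_counit:
  assumes nu: "is_nat_trans C C (Go \<circ> Fo) (Ga \<circ> Fa) id id nu"
    and eta_nu: "\<forall>X \<in> Ob C. comp C (eta X) (nu X) = idt C (Go (Fo X))"
    and X: "X \<in> Ob C"
  shows "Fa (nu X) = eps (Fo X)"
proof (rule eq_if_transpose_eq)
  have nu_X: "nu X \<in> Hom C (Go (Fo X)) X"
    using nat_trans_component[OF nu X] by (simp add: Hom_def)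
  then show "Fa (nu X) \<in> Hom D (Fo (Go (Fo X))) (Fo X)"
    using X by (simp add: Hom_def)
  show "eps (Fo X) \<in> Hom D (Fo (Go (Fo X))) (Fo X)"
    using X by (simp add: Hom_def)
  have "comp C (Ga (Fa (nu X))) (eta (Go (Fo X))) = idt C (Go (Fo X))"
    using unit_natural[OF nu_X] eta_nu X by simp
  then show "comp C (Ga (Fa (nu X))) (eta (Go (Fo X)))
      = comp C (Ga (eps (Fo X))) (eta (Go (Fo X)))"
    using X by simp
qed (use X in simp)

lemma naturally_full_if_natural_unit_section:
  assumes nu: "is_nat_trans C C (Go \<circ> Fo) (Ga \<circ> Fa) id id nu"
    and eta_nu: "\<forall>X \<in> Ob C. comp C (eta X) (nu X) = idt C (Go (Fo X))"
  shows "naturally_full C D Fo Fa"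
proof -
  have nu_component [simp]: "nu X \<in> Ar C" "dom C (nu X) = Go (Fo X)" "cod C (nu X) = X"
    if "X \<in> Ob C" for X
    using nat_trans_component[OF nu that] by auto
  have nu_natural: "comp C (nu Y) (Ga (Fa f)) = comp C f (nu X)" if "f \<in> Hom C X Y" for f X Y
    using nat_trans_naturality[OF nu that] by simp
  define P where "P X Y u = comp C (nu Y) (comp C (Ga u) (eta X))" for X Y u
  have "P X Y u \<in> Hom C X Y"
    if "X \<in> Ob C" "Y \<in> Ob C" "u \<in> Hom D (Fo X) (Fo Y)" for X Y u
    using that by (simp add: P_def Hom_def)
  moreover have "Fa (P X Y u) = u"
    if "X \<in> Ob C" "Y \<in> Ob C" "u \<in> Hom D (Fo X) (Fo Y)" for X Y u
  proof -
    have "Fa (P X Y u) = comp D (Fa (nu Y)) (Fa (comp C (Ga u) (eta X)))"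
      using that by (simp add: P_def Hom_def F_comp)
    also have "\<dots> = comp D (eps (Fo Y)) (Fa (comp C (Ga u) (eta X)))"
      using Fa_unit_section_eq_counit[OF nu eta_nu that(2)] by simp
    also have "\<dots> = u"
      using counit_transpose that by simp
    finally show ?thesis .
  qed
  moreover have "P X T (comp D (Fa h) (comp D g (Fa f))) = comp C h (comp C (P Y Z g) f)"
    if "X \<in> Ob C" "Y \<in> Ob C" "Z \<in> Ob C" "T \<in> Ob C"
      and f: "f \<in> Hom C X Y" and g: "g \<in> Hom D (Fo Y) (Fo Z)" and h: "h \<in> Hom C Z T"
    for X Y Z T f g h
  proof -
    have "P X T (comp D (Fa h) (comp D g (Fa f)))
        = comp C (comp C (nu T) (Ga (Fa h))) (comp C (Ga g) (comp C (Ga (Fa f)) (eta X)))"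
      using that by (simp add: P_def Hom_def G_comp)
    also have "\<dots> = comp C (comp C h (nu Z)) (comp C (Ga g) (comp C (eta Y) f))"
      by (simp only: nu_natural[OF h] unit_natural[OF f])
    also have "\<dots> = comp C h (comp C (P Y Z g) f)"
      using that by (simp add: P_def Hom_def)
    finally show ?thesis .
  qed
  ultimately show ?thesis
    unfolding naturally_full_def by (intro exI[of _ P]) blast
qed

lemma natural_unit_section_if_naturally_full:
  assumes "naturally_full C D Fo Fa"
  obtains nu where "is_nat_trans C C (Go \<circ> Fo) (Ga \<circ> Fa) id id nu"
    and "\<forall>X \<in> Ob C. comp C (eta X) (nu X) = idt C (Go (Fo X))"
proof -
  obtain P where
    P_Hom: "\<And>X Y u. \<lbrakk>X \<in> Ob C; Y \<in> Ob C; u \<in> Hom D (Fo X) (Fo Y)\<rbrakk>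
      \<Longrightarrow> P X Y u \<in> Hom C X Y" and
    P_lifts: "\<And>X Y u. \<lbrakk>X \<in> Ob C; Y \<in> Ob C; u \<in> Hom D (Fo X) (Fo Y)\<rbrakk>
      \<Longrightarrow> Fa (P X Y u) = u" and
    P_left: "\<And>X Y Z u h. \<lbrakk>X \<in> Ob C; u \<in> Hom D (Fo X) (Fo Y); h \<in> Hom C Y Z\<rbrakk>
      \<Longrightarrow> P X Z (comp D (Fa h) u) = comp C h (P X Y u)" and
    P_right: "\<And>X Y Z f u. \<lbrakk>Z \<in> Ob C; f \<in> Hom C X Y; u \<in> Hom D (Fo Y) (Fo Z)\<rbrakk>
      \<Longrightarrow> P X Z (comp D u (Fa f)) = comp C (P Y Z u) f"
    using naturally_fullE[OF F_functor assms] by blast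
  define nu where "nu X = P (Go (Fo X)) X (eps (Fo X))" for X
  have eps_FX: "eps (Fo X) \<in> Hom D (Fo (Go (Fo X))) (Fo X)" if "X \<in> Ob C" for X
    using that by (simp add: Hom_def)
  have nu_Hom: "nu X \<in> Hom C (Go (Fo X)) X" if "X \<in> Ob C" for X
    using P_Hom[OF _ that eps_FX[OF that]] that by (simp add: nu_def)
  have Fa_nu: "Fa (nu X) = eps (Fo X)" if "X \<in> Ob C" for X
    using P_lifts[OF _ that eps_FX[OF that]] that by (simp add: nu_def)
  have nu_natural: "comp C (nu Y) (Ga (Fa f)) = comp C f (nu X)" if f: "f \<in> Hom C X Y" for f X Y
  proof -
    have X: "X \<in> Ob C" and Y: "Y \<in> Ob C"
      using f cat_dom_cod_Ob[of C f] by (auto simp: Hom_def)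
    have GFf: "Ga (Fa f) \<in> Hom C (Go (Fo X)) (Go (Fo Y))"
      using f by (simp add: Hom_def)
    have "comp C (nu Y) (Ga (Fa f)) = P (Go (Fo X)) Y (comp D (eps (Fo Y)) (Fa (Ga (Fa f))))"
      using P_right[OF Y GFf eps_FX[OF Y]] by (simp add: nu_def)
    also have "\<dots> = P (Go (Fo X)) Y (comp D (Fa f) (eps (Fo X)))"
      using counit_natural[of "Fa f" "Fo X" "Fo Y"] f by (simp add: Hom_def)
    also have "\<dots> = comp C f (nu X)"
      using P_left[OF _ eps_FX[OF X] f] X by (simp add: nu_def)
    finally show ?thesis .
  qed
  have "comp C (eta X) (nu X) = idt C (Go (Fo X))" if "X \<in> Ob C" for X
  proof -
    have "comp C (eta X) (nu X) = comp C (Ga (Fa (nu X))) (eta (Go (Fo X)))"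
      using unit_natural[OF nu_Hom[OF that]] by simp
    also have "\<dots> = idt C (Go (Fo X))"
      using Fa_nu that by simp
    finally show ?thesis .
  qed
  moreover have "is_nat_trans C C (Go \<circ> Fo) (Ga \<circ> Fa) id id nu"
    using unit_nat_trans nu_Hom nu_natural unfolding is_nat_trans_def by simp
  ultimately show ?thesis
    using that by blast
qed

lemma naturally_full_iff_natural_unit_section:
  "naturally_full C D Fo Fa \<longleftrightarrow>
    (\<exists>nu. is_nat_trans C C (Go \<circ> Fo) (Ga \<circ> Fa) id id nu
      \<and> (\<forall>X \<in> Ob C. comp C (eta X) (nu X) = idt C (Go (Fo X))))"
  by (metis natural_unit_section_if_naturally_full naturally_full_if_natural_unit_section)

lemma counit_inverse_if_naturally_full:
  assumes "naturally_full C D Fo Fa" "X \<in> Ob C"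
  shows "comp D (Fa (eta X)) (eps (Fo X)) = idt D (Fo (Go (Fo X)))"
proof -
  obtain nu where nu: "is_nat_trans C C (Go \<circ> Fo) (Ga \<circ> Fa) id id nu"
    and eta_nu: "\<forall>X \<in> Ob C. comp C (eta X) (nu X) = idt C (Go (Fo X))"
    using natural_unit_section_if_naturally_full[OF assms(1)] .
  have "comp D (Fa (eta X)) (eps (Fo X)) = Fa (comp C (eta X) (nu X))"
    using Fa_unit_section_eq_counit[OF nu eta_nu assms(2)] nat_trans_component[OF nu assms(2)]
      assms(2)
    by (simp add: F_comp)
  also have "\<dots> = idt D (Fo (Go (Fo X)))"
    using eta_nu assms(2) by simp
  finally show ?thesis .
qed

end

theorem theorem2p6:
  fixes C :: "('o, 'a) category" and D :: "('p, 'b) category"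
    and Fo :: "'o \<Rightarrow> 'p" and Fa :: "'a \<Rightarrow> 'b"
    and Go :: "'p \<Rightarrow> 'o" and Ga :: "'b \<Rightarrow> 'a"
    and eta :: "'o \<Rightarrow> 'a" and eps :: "'p \<Rightarrow> 'b"
  assumes adj: "is_adjunction C D Fo Fa Go Ga eta eps"
  shows "(naturally_full C D Fo Fa \<longleftrightarrow>
            (\<exists>nu. is_nat_trans C C (Go \<circ> Fo) (Ga \<circ> Fa) id id nu
                 \<and> (\<forall>X \<in> Ob C. comp C (eta X) (nu X) = idt C (Go (Fo X)))))
       \<and> (naturally_full C D Fo Fa \<longrightarrow>
            (\<forall>X \<in> Ob C. comp D (eps (Fo X)) (Fa (eta X)) = idt D (Fo X)
                      \<and> comp D (Fa (eta X)) (eps (Fo X)) = idt D (Fo (Go (Fo X)))))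
       \<and> (naturally_full D C Go Ga \<longleftrightarrow>
            (\<exists>xi. is_nat_trans D D id id (Fo \<circ> Go) (Fa \<circ> Ga) xi
                 \<and> (\<forall>Y \<in> Ob D. comp D (xi Y) (eps Y) = idt D (Fo (Go Y)))))
       \<and> (naturally_full D C Go Ga \<longrightarrow>
            (\<forall>Y \<in> Ob D. comp C (Ga (eps Y)) (eta (Go Y)) = idt C (Go Y)
                      \<and> comp C (eta (Go Y)) (Ga (eps Y)) = idt C (Go (Fo (Go Y)))))"
proof -
  interpret adjunction C D Fo Fa Go Ga eta eps
    using adj by unfold_locales
  interpret dual: adjunction "op_cat D" "op_cat C" Go Ga Fo Fa eps eta
    using is_adjunction_op_cat[OF adj] by unfold_locales
  have "naturally_full D C Go Ga \<longleftrightarrow> naturally_full (op_cat D) (op_cat C) Go Ga"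
    using naturally_full_op_cat_iff[OF G_functor] by simp
  then show ?thesis
    using naturally_full_iff_natural_unit_section counit_inverse_if_naturally_full
      dual.naturally_full_iff_natural_unit_section dual.counit_inverse_if_naturally_full
    by simp
qed

end
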